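(* If $X$ is a closed convex subset of $\mathbb{R}^n$, then $\mathit{HM}_2(X)=0$.
   Context: $X$ carries the Euclidean (subspace) metric. For a metric space $X$, the magnitude homology $\mathit{HM}^\ell_k(X)$ is the degree-$k$ homology of the chain complex whose $k$-chains in grading $\ell$ are the free abelian group on symbols $\langle x_0,\dots,x_k\rangle$ with $x_i\neq x_{i+1}$ and $d(x_0,x_1)+\cdots+d(x_{k-1},x_k)=\ell$, with boundary $\sum_i(-1)^i d^i$, where $d^i$ deletes $x_i$ if $d(x_{i-1},x_i)+d(x_i,x_{i+1})=d(x_{i-1},x_{i+1})$ and is $0$ otherwise (deleting an endpoint always gives $0$); $\mathit{HM}_2(X)=0$ means $\mathit{HM}^\ell_2(X)=0$ for all $\ell$. *)

theory Defs
  imports "HOL-Analysis.Analysis"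
begin

text \<open>Magnitude homology of a metric space (here: subset X of a metric space
with the subspace metric).\<close>

definition mag_gen :: "'a::metric_space set \<Rightarrow> nat \<Rightarrow> real \<Rightarrow> 'a list \<Rightarrow> bool" where
  "mag_gen X k l xs \<longleftrightarrow>
     length xs = Suc k \<and> set xs \<subseteq> X \<and>
     (\<forall>i<k. xs ! i \<noteq> xs ! Suc i) \<and>
     (\<Sum>i<k. dist (xs ! i) (xs ! Suc i)) = l"

definition mag_chain :: "'a::metric_space set \<Rightarrow> nat \<Rightarrow> real \<Rightarrow> ('a list \<Rightarrow> int) \<Rightarrow> bool" where
  "mag_chain X k l c \<longleftrightarrow>
     finite {xs. c xs \<noteq> 0} \<and> (\<forall>xs. c xs \<noteq> 0 \<longrightarrow> mag_gen X k l xs)"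

text \<open>Coefficient of ys in the boundary of the generator xs:
 sum over inner indices i (endpoints contribute 0) of (-1)^i d^i.\<close>
definition mag_bd_gen :: "'a::metric_space list \<Rightarrow> 'a list \<Rightarrow> int" where
  "mag_bd_gen xs ys =
     (\<Sum>i\<in>{1..<length xs - 1}.
        if dist (xs ! (i - 1)) (xs ! i) + dist (xs ! i) (xs ! Suc i) = dist (xs ! (i - 1)) (xs ! Suc i)
           \<and> ys = take i xs @ drop (Suc i) xs
        then (-1) ^ i else 0)"

definition mag_bd :: "('a::metric_space list \<Rightarrow> int) \<Rightarrow> ('a list \<Rightarrow> int)" where
  "mag_bd c = (\<lambda>ys. \<Sum>xs\<in>{xs. c xs \<noteq> 0}. c xs * mag_bd_gen xs ys)"

text \<open>HM^l_2(X) = 0 for all l: every 2-cycle of grading l is a boundary of a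
3-chain of grading l.\<close>
definition HM2_vanishes :: "'a::metric_space set \<Rightarrow> bool" where
  "HM2_vanishes X \<longleftrightarrow>
     (\<forall>l c. mag_chain X 2 l c \<and> mag_bd c = (\<lambda>_. 0) \<longrightarrow>
        (\<exists>b. mag_chain X 3 l b \<and> mag_bd b = c))"

end

theory Submission
  imports Defs
begin

text \<open>Every generator [a, p, b] of a 2-chain is filled by at most one 3-simplex.
If p is not between a and b, take [a, q, p, b] with q the midpoint of a and p: by strict
convexity of the Euclidean norm q, p, b are again not aligned, so its boundary is exactly
[a, p, b]. If p is between a and b, take [a, p, m, b] or -[a, m, p, b] with m the midpoint
of a and b; its boundary is [a, p, b] - [a, m, b]. The error terms [a, m, b] form the
midpoint subdivision of the boundary of the chain, so they cancel on cycles.\<close>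

definition mag_single :: "'a list \<Rightarrow> int \<Rightarrow> 'a list \<Rightarrow> int" where
  "mag_single w s z = (if z = w then s else 0)"

lemma mag_bd_single: "mag_bd (mag_single w s) ys = s * mag_bd_gen w ys"
proof (cases "s = 0")
  case False
  then have "{z. mag_single w s z \<noteq> 0} = {w}" by (auto simp: mag_single_def)
  then show ?thesis by (simp add: mag_bd_def mag_single_def)
qed (simp add: mag_bd_def mag_single_def)

lemma mag_chain_single: "mag_gen X k l w \<Longrightarrow> mag_chain X k l (mag_single w s)"
  by (auto simp: mag_chain_def mag_single_def)

lemma mag_bd_sum:
  assumes "finite S" and "\<And>g. g \<in> S \<Longrightarrow> finite {z. f g z \<noteq> 0}"
  shows "mag_bd (\<lambda>z. \<Sum>g\<in>S. c g * f g z) ys = (\<Sum>g\<in>S. c g * mag_bd (f g) ys)"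
proof -
  define T where "T = (\<Union>g\<in>S. {z. f g z \<noteq> 0})"
  have "finite T" unfolding T_def using assms by blast
  have supp_T: "{z. f g z \<noteq> 0} \<subseteq> T" if "g \<in> S" for g
    unfolding T_def using that by blast
  have mag_bd_on_T: "mag_bd h ys = (\<Sum>z\<in>T. h z * mag_bd_gen z ys)" if "{z. h z \<noteq> 0} \<subseteq> T" for h
    unfolding mag_bd_def using \<open>finite T\<close> that by (intro sum.mono_neutral_left) auto
  have "{z. (\<Sum>g\<in>S. c g * f g z) \<noteq> 0} \<subseteq> T"
    unfolding T_def by (fastforce elim: sum.not_neutral_contains_not_neutral)
  then have "mag_bd (\<lambda>z. \<Sum>g\<in>S. c g * f g z) ys
      = (\<Sum>z\<in>T. \<Sum>g\<in>S. c g * (f g z * mag_bd_gen z ys))"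
    by (simp add: mag_bd_on_T sum_distrib_right mult.assoc)
  also have "\<dots> = (\<Sum>g\<in>S. c g * (\<Sum>z\<in>T. f g z * mag_bd_gen z ys))"
    by (subst sum.swap) (simp add: sum_distrib_left)
  also have "\<dots> = (\<Sum>g\<in>S. c g * mag_bd (f g) ys)"
    by (intro sum.cong refl) (simp add: mag_bd_on_T supp_T)
  finally show ?thesis .
qed

lemma mag_chain_sum:
  assumes "finite S" and "\<And>g. g \<in> S \<Longrightarrow> mag_chain X k l (f g)"
  shows "mag_chain X k l (\<lambda>z. \<Sum>g\<in>S. c g * f g z)"
proof -
  have "{z. (\<Sum>g\<in>S. c g * f g z) \<noteq> 0} \<subseteq> (\<Union>g\<in>S. {z. f g z \<noteq> 0})"
    by (fastforce elim: sum.not_neutral_contains_not_neutral)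
  then show ?thesis
    using assms unfolding mag_chain_def by (auto intro: finite_subset)
qed

lemma mag_gen_2_iff:
  "mag_gen X 2 l [a, p, b] \<longleftrightarrow>
     a \<in> X \<and> p \<in> X \<and> b \<in> X \<and> a \<noteq> p \<and> p \<noteq> b \<and> dist a p + dist p b = l"
  by (auto simp: mag_gen_def numeral_2_eq_2 less_Suc_eq)

lemma mag_gen_3_iff:
  "mag_gen X 3 l [a, p, q, b] \<longleftrightarrow>
     a \<in> X \<and> p \<in> X \<and> q \<in> X \<and> b \<in> X \<and> a \<noteq> p \<and> p \<noteq> q \<and> q \<noteq> b \<and>
     dist a p + dist p q + dist q b = l"
  by (auto simp: mag_gen_def numeral_3_eq_3 less_Suc_eq)

lemma mag_bd_gen_2:
  "mag_bd_gen [a, p, b] ys = (if dist a p + dist p b = dist a b \<and> ys = [a, b] then -1 else 0)"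
proof -
  have "{1..<length [a, p, b] - 1} = {1::nat}" by auto
  then show ?thesis unfolding mag_bd_gen_def by (simp only:) simp
qed

lemma mag_bd_gen_3:
  "mag_bd_gen [a, p, q, b] ys =
     (if dist p q + dist q b = dist p b \<and> ys = [a, p, b] then 1 else 0) -
     (if dist a p + dist p q = dist a q \<and> ys = [a, q, b] then 1 else 0)"
proof -
  have "{1..<3::nat} = {1, 2}" by auto
  then show ?thesis by (simp add: mag_bd_gen_def)
qed

lemma mag_bd_gen_on_geodesic:
  fixes P :: "real \<Rightarrow> 'a::metric_space"
  assumes P: "\<And>s t. dist (P s) (P t) = \<bar>s - t\<bar> * L"
    and "s0 \<le> s1" "s1 \<le> s2" "s2 \<le> s3"
  shows "mag_bd_gen [P s0, P s1, P s2, P s3] ys =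
     (if ys = [P s0, P s1, P s3] then 1 else 0) - (if ys = [P s0, P s2, P s3] then 1 else 0)"
proof -
  have "dist (P r) (P s) + dist (P s) (P t) = dist (P r) (P t)" if "r \<le> s" "s \<le> t" for r s t
  proof -
    have "\<bar>r - s\<bar> + \<bar>s - t\<bar> = \<bar>r - t\<bar>" using that by arith
    then show ?thesis unfolding P by (metis distrib_right)
  qed
  then show ?thesis using assms(2-4) by (simp add: mag_bd_gen_3)
qed

lemma mag_gen_on_geodesic:
  fixes P :: "real \<Rightarrow> 'a::metric_space"
  assumes P: "\<And>s t. dist (P s) (P t) = \<bar>s - t\<bar> * L" and "L > 0"
    and "s0 < s1" "s1 < s2" "s2 < s3"
    and "P s0 \<in> X" "P s1 \<in> X" "P s2 \<in> X" "P s3 \<in> X"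
  shows "mag_gen X 3 ((s3 - s0) * L) [P s0, P s1, P s2, P s3]"
proof -
  have "P s \<noteq> P t" if "s \<noteq> t" for s t
    using that \<open>L > 0\<close> P[of s t] by auto
  then show ?thesis using assms(3-) by (auto simp: mag_gen_3_iff P algebra_simps)
qed

lemma dist_segment_points:
  fixes a b :: "'a::real_normed_vector"
  shows "dist ((1 - s) *\<^sub>R a + s *\<^sub>R b) ((1 - t) *\<^sub>R a + t *\<^sub>R b) = \<bar>s - t\<bar> * dist a b"
proof -
  have "((1 - s) *\<^sub>R a + s *\<^sub>R b) - ((1 - t) *\<^sub>R a + t *\<^sub>R b) = (t - s) *\<^sub>R (a - b)"
    by (simp add: algebra_simps)
  then show ?thesis by (simp add: dist_norm abs_minus_commute)
qed

lemma between_midpoint_left: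
  fixes a p b :: "'a::real_vector"
  assumes "between (midpoint a p, b) p"
  shows "between (a, b) p"
proof -
  obtain t where t: "0 \<le> t" "t \<le> 1" "p = (1 - t) *\<^sub>R midpoint a p + t *\<^sub>R b"
    using assms by (rule betweenE)
  have "p = (1 / (1 + t)) *\<^sub>R ((1 + t) *\<^sub>R p)"
    using t by simp
  also have "(1 + t) *\<^sub>R p = (1 - t) *\<^sub>R a + (2 * t) *\<^sub>R b"
  proof -
    have "2 *\<^sub>R p = (1 - t) *\<^sub>R (2 *\<^sub>R midpoint a p) + (2 * t) *\<^sub>R b"
      by (subst (1) t(3)) (simp add: scaleR_add_right)
    also have "2 *\<^sub>R midpoint a p = a + p"
      by (simp add: midpoint_def)
    finally show ?thesis by (simp add: algebra_simps scaleR_2)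
  qed
  also have "(1 / (1 + t)) *\<^sub>R ((1 - t) *\<^sub>R a + (2 * t) *\<^sub>R b)
      = (1 - 2 * t / (1 + t)) *\<^sub>R a + (2 * t / (1 + t)) *\<^sub>R b"
  proof -
    have "1 / (1 + t) * (1 - t) = 1 - 2 * t / (1 + t)"
      using t by (simp add: field_simps)
    then show ?thesis by (simp add: scaleR_add_right)
  qed
  finally have "p = (1 - 2 * t / (1 + t)) *\<^sub>R a + (2 * t / (1 + t)) *\<^sub>R b" .
  moreover have "0 \<le> 2 * t / (1 + t)" "2 * t / (1 + t) \<le> 1"
    using t(1,2) by (auto simp: field_simps)
  ultimately show ?thesis
    by (intro betweenI)
qed

fun mag_filler :: "'a::real_normed_vector list \<Rightarrow> 'a list \<Rightarrow> int" where
  "mag_filler [a, p, b] =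
     (if dist a p + dist p b = dist a b then
        if dist a p < dist a b / 2 then mag_single [a, p, midpoint a b, b] 1
        else if dist a b / 2 < dist a p then mag_single [a, midpoint a b, p, b] (-1)
        else (\<lambda>_. 0)
      else mag_single [a, midpoint a p, p, b] (-1))"
| "mag_filler _ = (\<lambda>_. 0)"

lemma mag_filler_on_segment:
  fixes a b :: "'a::real_normed_vector"
  assumes "convex X" "a \<in> X" "b \<in> X" "a \<noteq> b" "0 < u" "u < 1"
  defines "P t \<equiv> (1 - t) *\<^sub>R a + t *\<^sub>R b"
  shows "mag_chain X 3 (dist a b) (mag_filler [a, P u, b]) \<and>
    mag_bd (mag_filler [a, P u, b]) ys =
      (if ys = [a, P u, b] then 1 else 0) - (if ys = [a, midpoint a b, b] then 1 else 0)"
proof -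
  have dist_P: "dist (P s) (P t) = \<bar>s - t\<bar> * dist a b" for s t
    unfolding P_def by (rule dist_segment_points)
  have ends: "midpoint a b = P (1/2)" "a = P 0" "b = P 1"
    by (simp_all add: P_def midpoint_def scaleR_add_right)
  have "dist a b > 0" using \<open>a \<noteq> b\<close> by simp
  have P_X: "P t \<in> X" if "0 \<le> t" "t \<le> 1" for t
    using assms(1-3) that unfolding P_def convex_alt by blast
  have l: "dist a b = (1 - 0) * dist a b" by simp
  have mid: "midpoint (P 0) (P 1) = P (1/2)" using ends by simp
  consider "u < 1/2" | "1/2 < u" | "u = 1/2" by linarith
  then show ?thesis
  proof cases
    case 1
    then have filler: "mag_filler [P 0, P u, P 1] = mag_single [P 0, P u, P (1/2), P 1] 1"
      using assms(5) \<open>dist a b > 0\<close> by (simp add: dist_P mid algebra_simps)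
    have "mag_gen X 3 (dist a b) [P 0, P u, P (1/2), P 1]"
      by (subst l, intro mag_gen_on_geodesic[OF dist_P] P_X) (use 1 assms(5) \<open>dist a b > 0\<close> in auto)
    then show ?thesis
      unfolding ends filler using 1 assms(5)
      by (simp add: mid mag_chain_single mag_bd_single mag_bd_gen_on_geodesic[OF dist_P])
  next
    case 2
    then have filler: "mag_filler [P 0, P u, P 1] = mag_single [P 0, P (1/2), P u, P 1] (-1)"
      using assms(6) \<open>dist a b > 0\<close> by (simp add: dist_P mid algebra_simps)
    have "mag_gen X 3 (dist a b) [P 0, P (1/2), P u, P 1]"
      by (subst l, intro mag_gen_on_geodesic[OF dist_P] P_X) (use 2 assms(6) \<open>dist a b > 0\<close> in auto)
    then show ?thesis
      unfolding ends filler using 2 assms(6)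
      by (simp add: mid mag_chain_single mag_bd_single mag_bd_gen_on_geodesic[OF dist_P])
  next
    case 3
    have "mag_filler [a, P u, b] = (\<lambda>_. 0)"
      unfolding ends 3 by (simp add: dist_P mid)
    then show ?thesis
      unfolding ends(1) 3 by (simp add: mag_chain_def mag_bd_def)
  qed
qed

lemma mag_filler_collinear:
  fixes a p b :: "'a::euclidean_space"
  assumes "convex X" and gen: "mag_gen X 2 l [a, p, b]"
    and collinear: "dist a p + dist p b = dist a b"
  shows "mag_chain X 3 l (mag_filler [a, p, b]) \<and>
    mag_bd (mag_filler [a, p, b]) ys =
      (if ys = [a, p, b] then 1 else 0) - (if ys = [a, midpoint a b, b] then 1 else 0)"
proof -
  from gen have X: "a \<in> X" "b \<in> X" and "a \<noteq> p" "p \<noteq> b" and l: "l = dist a b"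
    using collinear by (auto simp: mag_gen_2_iff)
  have "between (a, b) p" using collinear by (simp add: between)
  then obtain u where "0 \<le> u" "u \<le> 1" and p: "p = (1 - u) *\<^sub>R a + u *\<^sub>R b"
    by (rule betweenE)
  moreover have "u \<noteq> 0" "u \<noteq> 1" using \<open>a \<noteq> p\<close> \<open>p \<noteq> b\<close> p by auto
  moreover have "a \<noteq> b"
    using collinear \<open>a \<noteq> p\<close> by (metis add_nonneg_eq_0_iff dist_eq_0_iff dist_self zero_le_dist)
  ultimately show ?thesis
    unfolding l p using mag_filler_on_segment[OF \<open>convex X\<close> X] by simp
qed

lemma mag_filler_noncollinear:
  fixes a p b :: "'a::euclidean_space"
  assumes "convex X" and gen: "mag_gen X 2 l [a, p, b]"
    and noncollinear: "dist a p + dist p b \<noteq> dist a b"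
  shows "mag_chain X 3 l (mag_filler [a, p, b]) \<and>
    mag_bd (mag_filler [a, p, b]) ys = (if ys = [a, p, b] then 1 else 0)"
proof -
  define q where "q = midpoint a p"
  from gen have X: "a \<in> X" "p \<in> X" "b \<in> X" and "a \<noteq> p" "p \<noteq> b"
    and l: "dist a p + dist p b = l"
    by (auto simp: mag_gen_2_iff)
  have "q \<in> X"
    unfolding q_def using \<open>convex X\<close> X(1,2)
    by (meson closed_segment_subset midpoint_in_closed_segment subsetD)
  have dq: "dist a q = dist a p / 2" "dist q p = dist a p / 2"
    unfolding q_def by (simp_all add: dist_midpoint)
  have "dist q p + dist p b \<noteq> dist q b"
    using noncollinear between_midpoint_left[of a p b] by (auto simp: q_def between)
  moreover have "mag_gen X 3 l [a, q, p, b]"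
    using X \<open>q \<in> X\<close> \<open>a \<noteq> p\<close> \<open>p \<noteq> b\<close> dq l by (auto simp: mag_gen_3_iff)
  ultimately show ?thesis
    using noncollinear dq
    by (simp add: q_def [symmetric] mag_chain_single mag_bd_single mag_bd_gen_3)
qed

fun mag_subdiv :: "('a::real_vector list \<Rightarrow> int) \<Rightarrow> 'a list \<Rightarrow> int" where
  "mag_subdiv e [x, m, y] = (if m = midpoint x y then e [x, y] else 0)"
| "mag_subdiv e _ = 0"

lemma mag_subdiv_bd_gen_2:
  "mag_subdiv (mag_bd_gen [a, p, b]) ys =
     - (if dist a p + dist p b = dist a b \<and> ys = [a, midpoint a b, b] then 1 else 0)"
  by (cases "(mag_bd_gen [a, p, b], ys)" rule: mag_subdiv.cases) (auto simp: mag_bd_gen_2)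

lemma mag_subdiv_sum:
  "mag_subdiv (\<lambda>z. \<Sum>g\<in>S. c g * e g z) ys = (\<Sum>g\<in>S. c g * mag_subdiv (e g) ys)"
  by (cases "(\<lambda>z. \<Sum>g\<in>S. c g * e g z, ys)" rule: mag_subdiv.cases)
    (auto simp: sum_distrib_left)

lemma mag_filler_boundary:
  fixes g :: "'a::euclidean_space list"
  assumes "convex X" and "mag_gen X 2 l g"
  shows "mag_chain X 3 l (mag_filler g) \<and>
    mag_bd (mag_filler g) ys = (if ys = g then 1 else 0) + mag_subdiv (mag_bd_gen g) ys"
proof -
  obtain a p b where g: "g = [a, p, b]"
    using \<open>mag_gen X 2 l g\<close> by (auto simp: mag_gen_def numeral_2_eq_2 length_Suc_conv)
  show ?thesis
    using mag_filler_collinear[OF assms[unfolded g]] mag_filler_noncollinear[OF assms[unfolded g]]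
    by (cases "dist a p + dist p b = dist a b") (simp_all add: g mag_subdiv_bd_gen_2)
qed

lemma HM2_vanishes_if_convex:
  fixes X :: "'a::euclidean_space set"
  assumes "convex X"
  shows "HM2_vanishes X"
  unfolding HM2_vanishes_def
proof (intro allI impI, elim conjE)
  fix l and c :: "'a list \<Rightarrow> int"
  assume c: "mag_chain X 2 l c" and cycle: "mag_bd c = (\<lambda>_. 0)"
  define S where "S = {g. c g \<noteq> 0}"
  have "finite S" and gen: "\<And>g. g \<in> S \<Longrightarrow> mag_gen X 2 l g"
    using c by (auto simp: mag_chain_def S_def)
  note filler = mag_filler_boundary[OF \<open>convex X\<close> gen]
  define filling where "filling z = (\<Sum>g\<in>S. c g * mag_filler g z)" for z
  have "mag_chain X 3 l filling"
    unfolding filling_def using \<open>finite S\<close> filler by (intro mag_chain_sum) auto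
  moreover have "mag_bd filling ys = c ys" for ys
  proof -
    have "mag_bd filling ys = (\<Sum>g\<in>S. c g * mag_bd (mag_filler g) ys)"
      unfolding filling_def using \<open>finite S\<close> filler by (intro mag_bd_sum) (auto simp: mag_chain_def)
    also have "\<dots> = (\<Sum>g\<in>S. c g * (if ys = g then 1 else 0))
        + (\<Sum>g\<in>S. c g * mag_subdiv (mag_bd_gen g) ys)"
      using filler by (simp add: distrib_left sum.distrib)
    also have "(\<Sum>g\<in>S. c g * (if ys = g then 1 else 0)) = (\<Sum>g\<in>S. if g = ys then c ys else 0)"
      by (intro sum.cong) auto
    also have "\<dots> = c ys"
      using \<open>finite S\<close> by (simp add: S_def)
    also have "(\<Sum>g\<in>S. c g * mag_subdiv (mag_bd_gen g) ys) = mag_subdiv (mag_bd c) ys"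
      by (simp add: mag_subdiv_sum mag_bd_def S_def)
    also have "\<dots> = 0"
      by (cases "(mag_bd c, ys)" rule: mag_subdiv.cases) (simp_all add: cycle)
    finally show ?thesis by simp
  qed
  ultimately show "\<exists>b. mag_chain X 3 l b \<and> mag_bd b = c"
    by blast
qed

theorem corollary7p23:
  fixes X :: "(real ^ 'n) set"
  assumes "closed X" and "convex X"
  shows "HM2_vanishes X"
  using \<open>convex X\<close> by (rule HM2_vanishes_if_convex)

end
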